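(* Let $(M^n,g)$ be a weakly Ricci symmetric manifold, i.e. a Riemannian manifold with nonzero (symmetric) Ricci tensor such that $$\nabla_a R_{bc} = A_a R_{bc} + B_b R_{ac} + D_c R_{ab}$$ for nonzero covector fields $A,B,D$. Then for $\alpha =A-B$ and also for $\alpha=A-D$: $$R_{cb}(\nabla_d \alpha_a - \nabla_a \alpha_d) + R_{ca}(\nabla_b \alpha_d - \nabla_d \alpha_b) + R_{cd}(\nabla_a \alpha_b - \nabla_b \alpha_a) = R_{dm}R_{bac}{}^m + R_{bm}R_{adc}{}^m + R_{am}R_{dbc}{}^m .$$
   Context: Abstract index notation with Einstein summation; $\nabla$ is the Levi-Civita connection. $R_{abc}{}^d = \partial_a \Gamma_{bc}^d - \partial_b\Gamma_{ac}^d - \Gamma_{ac}^k\Gamma_{bk}^d + \Gamma_{ak}^d \Gamma_{bc}^k$, $R_{ac}=R_{abc}{}^b$. *)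

theory Defs
  imports "HOL-Analysis.Analysis"
begin

text \<open>Local-coordinate rendering of Riemannian geometry. Points of a coordinate
patch are vectors in real^'n (the index type 'n is the dimension); tensor
components are real-valued functions of the point.\<close>

definition pd :: "'n::finite \<Rightarrow> (real^'n \<Rightarrow> real) \<Rightarrow> real^'n \<Rightarrow> real" where
  "pd i f x = deriv (\<lambda>t. f (x + t *\<^sub>R axis i 1)) 0"

fun iter_pd :: "'n::finite list \<Rightarrow> (real^'n \<Rightarrow> real) \<Rightarrow> real^'n \<Rightarrow> real" where
  "iter_pd [] f = f"
| "iter_pd (i # is) f = pd i (iter_pd is f)"

definition smooth_fun_on :: "(real^'n::finite) set \<Rightarrow> (real^'n \<Rightarrow> real) \<Rightarrow> bool" where
  "smooth_fun_on U f \<longleftrightarrow> (\<forall>is. \<forall>x\<in>U. iter_pd is f differentiable (at x))"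

definition riemannian_metric_on :: "(real^'n::finite) set \<Rightarrow> (real^'n \<Rightarrow> real^'n^'n) \<Rightarrow> bool" where
  "riemannian_metric_on U g \<longleftrightarrow> open U \<and>
     (\<forall>i j. smooth_fun_on U (\<lambda>x. g x $ i $ j)) \<and>
     (\<forall>x\<in>U. transpose (g x) = g x \<and> (\<forall>v. v \<noteq> 0 \<longrightarrow> v \<bullet> (g x *v v) > 0))"

text \<open>Christoffel symbols of the Levi-Civita connection: chr g k i j x = Gamma_ij^k.\<close>
definition chr :: "(real^'n::finite \<Rightarrow> real^'n^'n) \<Rightarrow> 'n \<Rightarrow> 'n \<Rightarrow> 'n \<Rightarrow> real^'n \<Rightarrow> real" where
  "chr g k i j x = (1/2) * (\<Sum>l\<in>UNIV. matrix_inv (g x) $ k $ l *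
      (pd i (\<lambda>y. g y $ j $ l) x + pd j (\<lambda>y. g y $ i $ l) x - pd l (\<lambda>y. g y $ i $ j) x))"

text \<open>Riemann tensor R_abc^d = d_a Gamma_bc^d - d_b Gamma_ac^d - Gamma_ac^k Gamma_bk^d + Gamma_ak^d Gamma_bc^k.\<close>
definition riem :: "(real^'n::finite \<Rightarrow> real^'n^'n) \<Rightarrow> 'n \<Rightarrow> 'n \<Rightarrow> 'n \<Rightarrow> 'n \<Rightarrow> real^'n \<Rightarrow> real" where
  "riem g a b c d x =
     pd a (chr g d b c) x - pd b (chr g d a c) x
     - (\<Sum>k\<in>UNIV. chr g k a c x * chr g d b k x)
     + (\<Sum>k\<in>UNIV. chr g d a k x * chr g k b c x)"

definition ric :: "(real^'n::finite \<Rightarrow> real^'n^'n) \<Rightarrow> 'n \<Rightarrow> 'n \<Rightarrow> real^'n \<Rightarrow> real" where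
  "ric g a c x = (\<Sum>b\<in>UNIV. riem g a b c b x)"

definition cov1 :: "(real^'n::finite \<Rightarrow> real^'n^'n) \<Rightarrow> (real^'n \<Rightarrow> real^'n) \<Rightarrow> 'n \<Rightarrow> 'n \<Rightarrow> real^'n \<Rightarrow> real" where
  "cov1 g w a b x = pd a (\<lambda>y. w y $ b) x - (\<Sum>k\<in>UNIV. chr g k a b x * w x $ k)"

definition cov2 :: "(real^'n::finite \<Rightarrow> real^'n^'n) \<Rightarrow> ('n \<Rightarrow> 'n \<Rightarrow> real^'n \<Rightarrow> real) \<Rightarrow> 'n \<Rightarrow> 'n \<Rightarrow> 'n \<Rightarrow> real^'n \<Rightarrow> real" where
  "cov2 g T a b c x = pd a (T b c) x
     - (\<Sum>k\<in>UNIV. chr g k a b x * T k c x)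
     - (\<Sum>k\<in>UNIV. chr g k a c x * T b k x)"

definition weakly_ricci_symmetric_on ::
  "(real^'n::finite) set \<Rightarrow> (real^'n \<Rightarrow> real^'n^'n) \<Rightarrow> (real^'n \<Rightarrow> real^'n) \<Rightarrow> (real^'n \<Rightarrow> real^'n) \<Rightarrow> (real^'n \<Rightarrow> real^'n) \<Rightarrow> bool" where
  "weakly_ricci_symmetric_on U g A B D \<longleftrightarrow>
     riemannian_metric_on U g \<and>
     (\<exists>x\<in>U. \<exists>b c. ric g b c x \<noteq> 0) \<and>
     (\<forall>i. smooth_fun_on U (\<lambda>x. A x $ i) \<and> smooth_fun_on U (\<lambda>x. B x $ i) \<and> smooth_fun_on U (\<lambda>x. D x $ i)) \<and>
     (\<exists>x\<in>U. A x \<noteq> 0) \<and> (\<exists>x\<in>U. B x \<noteq> 0) \<and> (\<exists>x\<in>U. D x \<noteq> 0) \<and>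
     (\<forall>x\<in>U. \<forall>a b c. cov2 g (ric g) a b c x =
        A x $ a * ric g b c x + B x $ b * ric g a c x + D x $ c * ric g a b x)"

end

theory Submission
  imports Defs
begin

(* Applying the second
   covariant derivative nabla_d to the defining relation
     nabla_a R_bc = A_a R_bc + B_b R_ac + D_c R_ab
   and antisymmetrising in (d,a) gives, by the Leibniz rule,
     [nabla_d, nabla_a] R_bc = (curl terms of A, B, D) + (terms with nabla R),
   where the nabla R terms are again replaced by the defining relation.  Summing the
   result cyclically over (d,a,b), everything except the curls of A - B cancels by the
   symmetry of the Ricci tensor.  On the other side, the Ricci identity
     [nabla_d, nabla_a] T_bc = - R_dab^m T_mc - R_dac^m T_bm
   together with the first Bianchi identity turns the cyclic sum into the stated
   curvature expression.  The case alpha = A - D follows because, R_bc being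
   symmetric, the roles of B and D in the defining relation can be exchanged. *)


section \<open>Coordinate partial derivatives\<close>

lemma has_real_derivative_along_line:
  assumes "f differentiable (at (y + t0 *\<^sub>R v))"
  shows "((\<lambda>t. f (y + t *\<^sub>R v)) has_real_derivative frechet_derivative f (at (y + t0 *\<^sub>R v)) v) (at t0)"
proof -
  let ?p = "y + t0 *\<^sub>R v"
  have f: "(f has_derivative frechet_derivative f (at ?p)) (at ?p)"
    using assms frechet_derivative_works by blast
  have lin: "linear (frechet_derivative f (at ?p))" using f has_derivative_linear by blast
  have line: "((\<lambda>t. y + t *\<^sub>R v) has_derivative (\<lambda>t. t *\<^sub>R v)) (at t0)"
    by (auto intro!: derivative_eq_intros)
  have "((\<lambda>t. f (y + t *\<^sub>R v)) has_derivative (\<lambda>t. frechet_derivative f (at ?p) (t *\<^sub>R v))) (at t0)"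
    using has_derivative_compose[OF line, of f] f by simp
  moreover have "(\<lambda>t. frechet_derivative f (at ?p) (t *\<^sub>R v)) = (*) (frechet_derivative f (at ?p) v)"
    using linear_cmul[OF lin] by (auto simp: fun_eq_iff)
  ultimately show ?thesis by (simp add: has_field_derivative_def)
qed

lemma pd_eqI:
  assumes "((\<lambda>t. f (x + t *\<^sub>R axis i 1)) has_real_derivative D) (at 0)"
  shows "pd i f x = D"
  unfolding pd_def using assms by (rule DERIV_imp_deriv)

lemma pd_eq_frechet_derivative:
  assumes "f differentiable (at x)"
  shows "pd i f x = frechet_derivative f (at x) (axis i 1)"
  using has_real_derivative_along_line[of f x 0 "axis i 1"] assms by (intro pd_eqI) simp

lemma has_real_derivative_pd:
  assumes "f differentiable (at (y + t0 *\<^sub>R axis i 1))"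
  shows "((\<lambda>t. f (y + t *\<^sub>R axis i 1)) has_real_derivative pd i f (y + t0 *\<^sub>R axis i 1)) (at t0)"
  using has_real_derivative_along_line[OF assms] pd_eq_frechet_derivative[OF assms] by simp

lemma pd_has_real_derivative:
  assumes "f differentiable (at x)"
  shows "((\<lambda>t. f (x + t *\<^sub>R axis i 1)) has_real_derivative pd i f x) (at 0)"
  using has_real_derivative_pd[of f x 0 i] assms by simp

lemma pd_add:
  assumes "f differentiable (at x)" "g differentiable (at x)"
  shows "pd i (\<lambda>y. f y + g y) x = pd i f x + pd i g x"
  by (rule pd_eqI) (rule DERIV_add[OF pd_has_real_derivative[OF assms(1)] pd_has_real_derivative[OF assms(2)]])

lemma pd_diff:
  assumes "f differentiable (at x)" "g differentiable (at x)"
  shows "pd i (\<lambda>y. f y - g y) x = pd i f x - pd i g x"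
  by (rule pd_eqI) (rule DERIV_diff[OF pd_has_real_derivative[OF assms(1)] pd_has_real_derivative[OF assms(2)]])

lemma pd_mult:
  assumes "f differentiable (at x)" "g differentiable (at x)"
  shows "pd i (\<lambda>y. f y * g y) x = pd i f x * g x + f x * pd i g x"
  by (rule pd_eqI)
    (use DERIV_mult[OF pd_has_real_derivative[OF assms(1)] pd_has_real_derivative[OF assms(2)]]
      in \<open>simp add: algebra_simps\<close>)

lemma pd_const: "pd i (\<lambda>y. c) x = 0"
  by (rule pd_eqI) simp

lemma pd_cmult:
  assumes "f differentiable (at x)"
  shows "pd i (\<lambda>y. c * f y) x = c * pd i f x"
  by (rule pd_eqI) (rule DERIV_cmult[OF pd_has_real_derivative[OF assms(1)]])

lemma pd_sum:
  assumes "\<And>k. k \<in> S \<Longrightarrow> f k differentiable (at x)"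
  shows "pd i (\<lambda>y. \<Sum>k\<in>S. f k y) x = (\<Sum>k\<in>S. pd i (f k) x)"
  by (rule pd_eqI) (rule DERIV_sum, rule pd_has_real_derivative[OF assms])

lemma pd_inverse:
  assumes "f differentiable (at x)" "f x \<noteq> 0"
  shows "pd i (\<lambda>y. inverse (f y)) x = - (pd i f x * inverse ((f x)\<^sup>2))"
  by (rule pd_eqI)
    (use DERIV_inverse_fun[OF pd_has_real_derivative[OF assms(1)]] assms(2)
      in \<open>simp add: power2_eq_square\<close>)

lemma pd_cong_open:
  assumes "open U" "x \<in> U" "\<And>y. y \<in> U \<Longrightarrow> f y = h y"
  shows "pd i f x = pd i h x"
proof -
  let ?S = "(\<lambda>t::real. x + t *\<^sub>R axis i 1) -` U"
  have "open ?S" by (rule open_vimage[OF assms(1)]) (intro continuous_intros)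
  moreover have "0 \<in> ?S" using assms(2) by simp
  ultimately have "\<forall>\<^sub>F t in nhds 0. t \<in> ?S" using eventually_nhds by blast
  then have "\<forall>\<^sub>F t in nhds 0. f (x + t *\<^sub>R axis i 1) = h (x + t *\<^sub>R axis i 1)"
    by eventually_elim (use assms(3) in auto)
  then show ?thesis unfolding pd_def by (rule deriv_cong_ev) simp
qed


section \<open>Functions of class C^k and smooth functions\<close>

definition Ck_on :: "(real^'n::finite) set \<Rightarrow> nat \<Rightarrow> (real^'n \<Rightarrow> real) \<Rightarrow> bool" where
  "Ck_on U k f \<longleftrightarrow> (\<forall>is. length is \<le> k \<longrightarrow> (\<forall>x\<in>U. iter_pd is f differentiable (at x)))"

lemma iter_pd_append: "iter_pd (is @ [i]) f = iter_pd is (pd i f)"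
  by (induction "is") auto

lemma smooth_iff_Ck_on: "smooth_fun_on U f \<longleftrightarrow> (\<forall>k. Ck_on U k f)"
  unfolding smooth_fun_on_def Ck_on_def by (metis le_refl)

lemma Ck_on_0: "Ck_on U 0 f \<longleftrightarrow> (\<forall>x\<in>U. f differentiable (at x))"
  unfolding Ck_on_def by auto

lemma Ck_on_Suc: "Ck_on U (Suc k) f \<longleftrightarrow> Ck_on U 0 f \<and> (\<forall>i. Ck_on U k (pd i f))"
proof
  assume a: "Ck_on U (Suc k) f"
  show "Ck_on U 0 f \<and> (\<forall>i. Ck_on U k (pd i f))"
  proof
    show "Ck_on U 0 f" using a unfolding Ck_on_def by (metis le0 order.trans)
    show "\<forall>i. Ck_on U k (pd i f)"
      using a unfolding Ck_on_def by (metis iter_pd_append length_append_singleton not_less_eq_eq)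
  qed
next
  assume a: "Ck_on U 0 f \<and> (\<forall>i. Ck_on U k (pd i f))"
  show "Ck_on U (Suc k) f"
    unfolding Ck_on_def
  proof (intro allI impI)
    fix "is" :: "'a list" assume l: "length is \<le> Suc k"
    show "\<forall>x\<in>U. iter_pd is f differentiable at x"
    proof (cases "is" rule: rev_exhaust)
      case Nil then show ?thesis using a by (simp add: Ck_on_0)
    next
      case (snoc js i)
      then show ?thesis using a l unfolding Ck_on_def by (simp add: iter_pd_append)
    qed
  qed
qed

lemma Ck_on_mono: "m \<le> k \<Longrightarrow> Ck_on U k f \<Longrightarrow> Ck_on U m f"
  unfolding Ck_on_def by auto

lemma Ck_on_differentiable: "Ck_on U k f \<Longrightarrow> x \<in> U \<Longrightarrow> f differentiable (at x)"
  unfolding Ck_on_def by (metis iter_pd.simps(1) list.size(3) zero_le)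

lemma iter_pd_cong_open:
  assumes "open U" "\<And>y. y \<in> U \<Longrightarrow> f y = h y"
  shows "y \<in> U \<Longrightarrow> iter_pd is f y = iter_pd is h y"
proof (induction "is" arbitrary: y)
  case Nil then show ?case using assms by simp
next
  case (Cons i js)
  then show ?case using pd_cong_open[OF assms(1) Cons(2), of "iter_pd js f" "iter_pd js h"] by simp
qed

lemma Ck_on_cong:
  assumes "open U" "\<And>y. y \<in> U \<Longrightarrow> f y = h y" "Ck_on U k f"
  shows "Ck_on U k h"
  unfolding Ck_on_def
proof (intro allI impI ballI)
  fix "is" :: "'a list" and x assume l: "length is \<le> k" and x: "x \<in> U"
  have "iter_pd is f differentiable (at x)" using assms(3) l x unfolding Ck_on_def by auto
  then obtain D where "(iter_pd is f has_derivative D) (at x)" unfolding differentiable_def by blast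
  then have "(iter_pd is h has_derivative D) (at x)"
    by (rule has_derivative_transform_within_open[OF _ assms(1) x]) (rule iter_pd_cong_open[OF assms(1,2)])
  then show "iter_pd is h differentiable (at x)" unfolding differentiable_def by blast
qed

lemma Ck_on_const: "Ck_on U k (\<lambda>x. c)"
proof (induction k arbitrary: c)
  case 0 then show ?case by (simp add: Ck_on_0)
next
  case (Suc k)
  have "pd i (\<lambda>x. c) = (\<lambda>x. 0)" for i :: 'a by (simp add: fun_eq_iff pd_const)
  then show ?case using Suc.IH by (simp add: Ck_on_Suc Ck_on_0)
qed

lemma Ck_on_add:
  assumes "open U"
  shows "Ck_on U k f \<Longrightarrow> Ck_on U k g \<Longrightarrow> Ck_on U k (\<lambda>x. f x + g x)"
proof (induction k arbitrary: f g)
  case 0 then show ?case by (auto simp: Ck_on_0)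
next
  case (Suc k)
  have "Ck_on U k (pd i (\<lambda>x. f x + g x))" for i
  proof -
    have "Ck_on U k (\<lambda>x. pd i f x + pd i g x)" using Suc by (simp add: Ck_on_Suc)
    then show ?thesis
      by (rule Ck_on_cong[OF assms, rotated]) (use Suc.prems pd_add Ck_on_differentiable in metis)
  qed
  then show ?case using Suc.prems by (auto simp: Ck_on_Suc Ck_on_0)
qed

lemma Ck_on_cmult:
  assumes "open U"
  shows "Ck_on U k f \<Longrightarrow> Ck_on U k (\<lambda>x. c * f x)"
proof (induction k arbitrary: f)
  case 0 then show ?case by (auto simp: Ck_on_0)
next
  case (Suc k)
  have "Ck_on U k (pd i (\<lambda>x. c * f x))" for i
  proof -
    have "Ck_on U k (\<lambda>x. c * pd i f x)" using Suc by (simp add: Ck_on_Suc)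
    then show ?thesis
      by (rule Ck_on_cong[OF assms, rotated]) (use Suc.prems pd_cmult Ck_on_differentiable in metis)
  qed
  then show ?case using Suc.prems by (auto simp: Ck_on_Suc Ck_on_0)
qed

lemma Ck_on_mult:
  assumes "open U"
  shows "Ck_on U k f \<Longrightarrow> Ck_on U k g \<Longrightarrow> Ck_on U k (\<lambda>x. f x * g x)"
proof (induction k arbitrary: f g)
  case 0 then show ?case by (auto simp: Ck_on_0)
next
  case (Suc k)
  have "Ck_on U k (pd i (\<lambda>x. f x * g x))" for i
  proof -
    have f: "Ck_on U k f" "Ck_on U k (pd i f)" and g: "Ck_on U k g" "Ck_on U k (pd i g)"
      using Suc.prems Ck_on_mono[of k "Suc k"] by (auto simp: Ck_on_Suc)
    have "Ck_on U k (\<lambda>x. pd i f x * g x + f x * pd i g x)"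
      by (rule Ck_on_add[OF assms]; rule Suc.IH) (use f g in auto)
    then show ?thesis
      by (rule Ck_on_cong[OF assms, rotated]) (use Suc.prems pd_mult Ck_on_differentiable in metis)
  qed
  then show ?case using Suc.prems by (auto simp: Ck_on_Suc Ck_on_0)
qed

lemma Ck_on_inverse:
  assumes "open U" "\<And>x. x \<in> U \<Longrightarrow> f x \<noteq> 0"
  shows "Ck_on U k f \<Longrightarrow> Ck_on U k (\<lambda>x. inverse (f x))"
proof (induction k)
  case 0 then show ?case using assms(2) by (auto simp: Ck_on_0 intro: differentiable_inverse)
next
  case (Suc k)
  have ih: "Ck_on U k (\<lambda>x. inverse (f x))" using Suc Ck_on_mono[of k "Suc k"] by auto
  have "Ck_on U k (pd i (\<lambda>x. inverse (f x)))" for i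
  proof -
    have "Ck_on U k (pd i f)" using Suc.prems by (auto simp: Ck_on_Suc)
    then have "Ck_on U k (\<lambda>x. (-1) * (pd i f x * (inverse (f x) * inverse (f x))))"
      by (intro Ck_on_cmult Ck_on_mult assms ih)
    then show ?thesis
      by (rule Ck_on_cong[OF assms(1), rotated])
        (use pd_inverse[OF Ck_on_differentiable[OF Suc.prems] assms(2)] in \<open>auto simp: power2_eq_square\<close>)
  qed
  then show ?case using ih Ck_on_mono[of 0 k] by (auto simp: Ck_on_Suc)
qed

lemma Ck_on_sum:
  assumes "open U"
  shows "finite S \<Longrightarrow> (\<And>j. j \<in> S \<Longrightarrow> Ck_on U k (f j)) \<Longrightarrow> Ck_on U k (\<lambda>x. \<Sum>j\<in>S. f j x)"
  by (induction S rule: finite_induct) (auto simp: Ck_on_const Ck_on_add[OF assms])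

lemma Ck_on_prod:
  assumes "open U"
  shows "finite S \<Longrightarrow> (\<And>j. j \<in> S \<Longrightarrow> Ck_on U k (f j)) \<Longrightarrow> Ck_on U k (\<lambda>x. \<Prod>j\<in>S. f j x)"
  by (induction S rule: finite_induct) (auto simp: Ck_on_const Ck_on_mult[OF assms])

lemma smooth_const: "smooth_fun_on U (\<lambda>x. c)"
  by (simp add: smooth_iff_Ck_on Ck_on_const)

lemma smooth_add: "open U \<Longrightarrow> smooth_fun_on U f \<Longrightarrow> smooth_fun_on U g \<Longrightarrow> smooth_fun_on U (\<lambda>x. f x + g x)"
  by (simp add: smooth_iff_Ck_on Ck_on_add)

lemma smooth_cmult: "open U \<Longrightarrow> smooth_fun_on U f \<Longrightarrow> smooth_fun_on U (\<lambda>x. c * f x)"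
  by (simp add: smooth_iff_Ck_on Ck_on_cmult)

lemma smooth_mult: "open U \<Longrightarrow> smooth_fun_on U f \<Longrightarrow> smooth_fun_on U g \<Longrightarrow> smooth_fun_on U (\<lambda>x. f x * g x)"
  by (simp add: smooth_iff_Ck_on Ck_on_mult)

lemma smooth_diff: "open U \<Longrightarrow> smooth_fun_on U f \<Longrightarrow> smooth_fun_on U g \<Longrightarrow> smooth_fun_on U (\<lambda>x. f x - g x)"
  using smooth_add[of U f "\<lambda>x. (-1) * g x"] smooth_cmult[of U g "-1"] by simp

lemma smooth_sum:
  "open U \<Longrightarrow> finite S \<Longrightarrow> (\<And>j. j \<in> S \<Longrightarrow> smooth_fun_on U (f j)) \<Longrightarrow> smooth_fun_on U (\<lambda>x. \<Sum>j\<in>S. f j x)"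
  by (simp add: smooth_iff_Ck_on Ck_on_sum)

lemma smooth_prod:
  "open U \<Longrightarrow> finite S \<Longrightarrow> (\<And>j. j \<in> S \<Longrightarrow> smooth_fun_on U (f j)) \<Longrightarrow> smooth_fun_on U (\<lambda>x. \<Prod>j\<in>S. f j x)"
  by (simp add: smooth_iff_Ck_on Ck_on_prod)

lemma smooth_inverse:
  "open U \<Longrightarrow> (\<And>x. x \<in> U \<Longrightarrow> f x \<noteq> 0) \<Longrightarrow> smooth_fun_on U f \<Longrightarrow> smooth_fun_on U (\<lambda>x. inverse (f x))"
  by (simp add: smooth_iff_Ck_on Ck_on_inverse)

lemma smooth_pd: "smooth_fun_on U f \<Longrightarrow> smooth_fun_on U (pd i f)"
  by (meson smooth_iff_Ck_on Ck_on_Suc)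

lemma smooth_cong: "open U \<Longrightarrow> (\<And>y. y \<in> U \<Longrightarrow> f y = h y) \<Longrightarrow> smooth_fun_on U f \<Longrightarrow> smooth_fun_on U h"
  unfolding smooth_iff_Ck_on using Ck_on_cong by blast

lemma smooth_differentiable: "smooth_fun_on U f \<Longrightarrow> x \<in> U \<Longrightarrow> f differentiable (at x)"
  unfolding smooth_iff_Ck_on using Ck_on_differentiable by blast

lemma smooth_det:
  assumes "open U" "\<And>i j. smooth_fun_on U (\<lambda>x. M x $ i $ j)"
  shows "smooth_fun_on U (\<lambda>x. det (M x :: real^'n::finite^'n))"
  unfolding det_def
  by (intro smooth_sum smooth_cmult smooth_prod assms finite_permutations) auto


section \<open>Symmetry of second partial derivatives\<close>

lemma Ck_on_2_differentiable:
  assumes "Ck_on U 2 f" "y \<in> U"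
  shows "f differentiable (at y)" "pd i f differentiable (at y)" "pd j (pd i f) differentiable (at y)"
proof -
  have "Ck_on U 1 (pd i f)" "Ck_on U 0 (pd j (pd i f))" "Ck_on U 0 f"
    using assms(1) by (auto simp: numeral_2_eq_2 Ck_on_Suc)
  then show "f differentiable (at y)" "pd i f differentiable (at y)" "pd j (pd i f) differentiable (at y)"
    using assms(2) by (auto simp: Ck_on_0 Ck_on_Suc)
qed

lemma dist_axis_square:
  fixes x :: "real^'n::finite"
  assumes "0 \<le> s" "0 \<le> t"
  shows "dist (x + s *\<^sub>R axis i 1 + t *\<^sub>R axis j 1) x \<le> s + t"
proof -
  let ?e = "axis i 1 :: real^'n" and ?d = "axis j 1 :: real^'n"
  have "norm (s *\<^sub>R ?e + t *\<^sub>R ?d) \<le> norm (s *\<^sub>R ?e) + norm (t *\<^sub>R ?d)"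
    by (rule norm_triangle_ineq)
  also have "\<dots> = s + t" using assms by (simp add: norm_axis_1)
  finally show ?thesis by (simp add: dist_norm add.assoc)
qed

text \<open>Two applications of the mean value theorem: the second difference of f over a
  small square with sides along axes i and j equals h^2 times a mixed partial at a
  point of the square.\<close>
lemma second_difference_mvt:
  fixes x :: "real^'n::finite"
  assumes f: "Ck_on U 2 f" and ball: "ball x \<delta> \<subseteq> U" and h: "0 < h" "2 * h < \<delta>"
  shows "\<exists>p. dist p x < \<delta> \<and>
    f (x + h *\<^sub>R axis i 1 + h *\<^sub>R axis j 1) - f (x + h *\<^sub>R axis i 1) - f (x + h *\<^sub>R axis j 1) + f x
      = h\<^sup>2 * pd j (pd i f) p"
proof -
  let ?e = "axis i 1 :: real^'n" and ?d = "axis j 1 :: real^'n"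
  have inU: "x + s *\<^sub>R ?e + t *\<^sub>R ?d \<in> U" if "0 \<le> s" "s \<le> h" "0 \<le> t" "t \<le> h" for s t
  proof -
    have "dist (x + s *\<^sub>R ?e + t *\<^sub>R ?d) x < \<delta>"
      using dist_axis_square[of s t x i j] that h by linarith
    then show ?thesis using ball by (auto simp: dist_commute)
  qed
  define \<phi> where "\<phi> = (\<lambda>t. f ((x + h *\<^sub>R ?d) + t *\<^sub>R ?e) - f (x + t *\<^sub>R ?e))"
  have "\<And>t. 0 \<le> t \<Longrightarrow> t \<le> h \<Longrightarrow> (\<phi> has_real_derivative
          (pd i f ((x + h *\<^sub>R ?d) + t *\<^sub>R ?e) - pd i f (x + t *\<^sub>R ?e))) (at t)"
  proof -
    fix t assume t: "0 \<le> t" "t \<le> h"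
    have u1: "(x + h *\<^sub>R ?d) + t *\<^sub>R ?e \<in> U" using inU[OF t, of h] h by (simp add: add_ac)
    have u2: "x + t *\<^sub>R ?e \<in> U" using inU[OF t, of 0] h by simp
    show "(\<phi> has_real_derivative
          (pd i f ((x + h *\<^sub>R ?d) + t *\<^sub>R ?e) - pd i f (x + t *\<^sub>R ?e))) (at t)"
      unfolding \<phi>_def
      by (intro DERIV_diff has_real_derivative_pd Ck_on_2_differentiable(1)[OF f] u1 u2)
  qed
  from MVT2[OF h(1) this] obtain \<xi> where xi: "0 < \<xi>" "\<xi> < h"
    and eq1: "\<phi> h - \<phi> 0 = (h - 0) * (pd i f ((x + h *\<^sub>R ?d) + \<xi> *\<^sub>R ?e) - pd i f (x + \<xi> *\<^sub>R ?e))"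
    by blast
  define \<psi> where "\<psi> = (\<lambda>s. pd i f ((x + \<xi> *\<^sub>R ?e) + s *\<^sub>R ?d))"
  have "\<And>s. 0 \<le> s \<Longrightarrow> s \<le> h \<Longrightarrow> (\<psi> has_real_derivative pd j (pd i f) ((x + \<xi> *\<^sub>R ?e) + s *\<^sub>R ?d)) (at s)"
  proof -
    fix s assume s: "0 \<le> s" "s \<le> h"
    have "(x + \<xi> *\<^sub>R ?e) + s *\<^sub>R ?d \<in> U" using inU[of \<xi> s] xi s by simp
    then show "(\<psi> has_real_derivative pd j (pd i f) ((x + \<xi> *\<^sub>R ?e) + s *\<^sub>R ?d)) (at s)"
      unfolding \<psi>_def by (intro has_real_derivative_pd Ck_on_2_differentiable(2)[OF f])
  qed
  from MVT2[OF h(1) this] obtain \<eta> where eta: "0 < \<eta>" "\<eta> < h"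
    and eq2: "\<psi> h - \<psi> 0 = (h - 0) * pd j (pd i f) ((x + \<xi> *\<^sub>R ?e) + \<eta> *\<^sub>R ?d)"
    by blast
  let ?p = "(x + \<xi> *\<^sub>R ?e) + \<eta> *\<^sub>R ?d"
  have dp: "dist ?p x < \<delta>" using dist_axis_square[of \<xi> \<eta> x i j] xi eta h by linarith
  have "\<psi> h - \<psi> 0 = pd i f ((x + h *\<^sub>R ?d) + \<xi> *\<^sub>R ?e) - pd i f (x + \<xi> *\<^sub>R ?e)"
    unfolding \<psi>_def by (simp add: add_ac)
  then have "\<phi> h - \<phi> 0 = h\<^sup>2 * pd j (pd i f) ?p" using eq1 eq2 by (simp add: power2_eq_square)
  moreover have "\<phi> h - \<phi> 0 = f (x + h *\<^sub>R ?e + h *\<^sub>R ?d) - f (x + h *\<^sub>R ?e) - f (x + h *\<^sub>R ?d) + f x"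
    unfolding \<phi>_def by (simp add: add_ac)
  ultimately show ?thesis using dp by metis
qed

text \<open>Comparing the two orders of taking the second difference: in every ball around x
  the two mixed partials take a common value.\<close>
lemma mixed_partials_meet:
  fixes x :: "real^'n::finite"
  assumes f: "Ck_on U 2 f" and ball: "ball x \<delta> \<subseteq> U" and "\<delta> > 0"
  shows "\<exists>p q. dist p x < \<delta> \<and> dist q x < \<delta> \<and> pd j (pd i f) p = pd i (pd j f) q"
proof -
  define h where "h = \<delta> / 3"
  have h: "0 < h" "2 * h < \<delta>" using \<open>\<delta> > 0\<close> by (auto simp: h_def)
  obtain p where p: "dist p x < \<delta>" and ep:
    "f (x + h *\<^sub>R axis i 1 + h *\<^sub>R axis j 1) - f (x + h *\<^sub>R axis i 1) - f (x + h *\<^sub>R axis j 1) + f x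
      = h\<^sup>2 * pd j (pd i f) p" using second_difference_mvt[OF f ball h, of i j] by blast
  obtain q where q: "dist q x < \<delta>" and eq:
    "f (x + h *\<^sub>R axis j 1 + h *\<^sub>R axis i 1) - f (x + h *\<^sub>R axis j 1) - f (x + h *\<^sub>R axis i 1) + f x
      = h\<^sup>2 * pd i (pd j f) q" using second_difference_mvt[OF f ball h, of j i] by blast
  have swap: "x + h *\<^sub>R axis j 1 + h *\<^sub>R axis i 1 = x + h *\<^sub>R axis i 1 + h *\<^sub>R axis j 1"
    by (simp add: add_ac)
  have "h\<^sup>2 * pd j (pd i f) p = h\<^sup>2 * pd i (pd j f) q" using ep eq unfolding swap by linarith
  then show ?thesis using p q h by auto
qed

text \<open>Schwarz: for C^2 functions the mixed partials commute (by continuity of both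
  mixed partials at x).\<close>
lemma schwarz:
  fixes x :: "real^'n::finite"
  assumes U: "open U" "x \<in> U" and f: "Ck_on U 2 f"
  shows "pd i (pd j f) x = pd j (pd i f) x"
proof (rule ccontr)
  let ?F = "pd j (pd i f)" and ?G = "pd i (pd j f)"
  assume "?G x \<noteq> ?F x"
  define \<epsilon> where "\<epsilon> = \<bar>?G x - ?F x\<bar> / 2"
  have e: "\<epsilon> > 0" using \<open>?G x \<noteq> ?F x\<close> by (simp add: \<epsilon>_def)
  have cF: "isCont ?F x" and cG: "isCont ?G x"
    using Ck_on_2_differentiable(3)[OF f U(2)] differentiable_imp_continuous_within by blast+
  obtain d1 where d1: "d1 > 0" "\<forall>y. dist y x < d1 \<longrightarrow> dist (?F y) (?F x) < \<epsilon>"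
    using cF e unfolding continuous_at_eps_delta by blast
  obtain d2 where d2: "d2 > 0" "\<forall>y. dist y x < d2 \<longrightarrow> dist (?G y) (?G x) < \<epsilon>"
    using cG e unfolding continuous_at_eps_delta by blast
  obtain d3 where d3: "d3 > 0" "ball x d3 \<subseteq> U" using openE[OF U] by blast
  have "ball x (min d1 (min d2 d3)) \<subseteq> U" using d3 by auto
  then obtain p q where "dist p x < min d1 (min d2 d3)" "dist q x < min d1 (min d2 d3)"
      and pq: "?F p = ?G q"
    using mixed_partials_meet[OF f] d1 d2 d3 by (metis min_less_iff_conj)
  then have "dist (?F p) (?F x) < \<epsilon>" "dist (?G q) (?G x) < \<epsilon>" using d1 d2 by auto
  then show False using pq unfolding \<epsilon>_def dist_real_def by (auto simp: abs_if split: if_splits)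
qed

section \<open>Smoothness of the metric inverse and the curvature\<close>

lemma matrix_inv_props:
  fixes A :: "'a::semiring_1^'n^'n"
  assumes "invertible A"
  shows "A ** matrix_inv A = mat 1" "matrix_inv A ** A = mat 1"
  using someI_ex[OF assms[unfolded invertible_def]] unfolding matrix_inv_def by auto

text \<open>Cramer's rule for the entries of the inverse matrix; it exhibits them as rational
  functions of the entries, which gives their smoothness.\<close>
lemma matrix_inv_cramer:
  fixes A :: "real^'n::finite^'n"
  assumes "det A \<noteq> 0"
  shows "matrix_inv A $ k $ l =
    det (\<chi> i j. if j = k then (if i = l then 1 else 0) else A $ i $ j) / det A"
proof -
  have inv: "invertible A" using assms invertible_det_nz by blast
  let ?b = "axis l 1 :: real^'n"
  have "A *v (matrix_inv A *v ?b) = ?b"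
    by (simp add: matrix_vector_mul_assoc matrix_inv_props(1)[OF inv])
  then have "matrix_inv A *v ?b = (\<chi> k. det(\<chi> i j. if j=k then ?b$i else A$i$j) / det A)"
    using cramer[OF assms] by blast
  then have "(matrix_inv A *v ?b) $ k = det(\<chi> i j. if j=k then ?b$i else A$i$j) / det A"
    by simp
  moreover have "(matrix_inv A *v ?b) $ k = matrix_inv A $ k $ l"
    by (simp add: matrix_vector_mult_def axis_def if_distrib cong: if_cong)
  moreover have "(\<chi> i j. if j=k then ?b$i else A$i$j)
      = (\<chi> i j. if j = k then (if i = l then 1 else 0) else A $ i $ j)"
    by (simp add: vec_eq_iff axis_def)
  ultimately show ?thesis by metis
qed

text \<open>A positive definite matrix is injective, hence has nonzero determinant.\<close>
lemma posdef_det_nonzero: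
  fixes A :: "real^'n::finite^'n"
  assumes "\<forall>v. v \<noteq> 0 \<longrightarrow> v \<bullet> (A *v v) > 0"
  shows "det A \<noteq> 0"
proof -
  have "inj ((*v) A)"
  proof (rule injI)
    fix u w assume "A *v u = A *v w"
    then have "A *v (u - w) = 0" by (simp add: matrix_vector_mult_diff_distrib)
    then show "u = w" using assms by (metis eq_iff_diff_eq_0 inner_zero_right less_irrefl)
  qed
  then have "det (matrix ((*v) A)) \<noteq> 0"
    using det_nz_iff_inj[OF matrix_vector_mul_linear] by blast
  then show ?thesis by (simp add: matrix_of_matrix_vector_mul)
qed

locale riemannian_patch =
  fixes U :: "(real^'n::finite) set" and g :: "real^'n \<Rightarrow> real^'n^'n"
  assumes metric: "riemannian_metric_on U g"
begin

lemma open_patch: "open U"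
  using metric by (simp add: riemannian_metric_on_def)

lemma smooth_g: "smooth_fun_on U (\<lambda>x. g x $ i $ j)"
  using metric by (simp add: riemannian_metric_on_def)

lemma g_sym:
  assumes "x \<in> U" shows "g x $ i $ j = g x $ j $ i"
proof -
  have "transpose (g x) = g x" using metric assms by (simp add: riemannian_metric_on_def)
  then have "transpose (g x) $ j $ i = g x $ j $ i" by simp
  then show ?thesis by (simp add: transpose_def)
qed

lemma det_g_nonzero: "x \<in> U \<Longrightarrow> det (g x) \<noteq> 0"
  using metric posdef_det_nonzero unfolding riemannian_metric_on_def by blast

lemma g_inverse: "x \<in> U \<Longrightarrow> g x ** matrix_inv (g x) = mat 1 \<and> matrix_inv (g x) ** g x = mat 1"
  using det_g_nonzero matrix_inv_props invertible_det_nz by blast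

lemma smooth_g_inv: "smooth_fun_on U (\<lambda>x. matrix_inv (g x) $ k $ l)"
proof -
  let ?M = "\<lambda>x. (\<chi> i j. if j = k then (if i = l then 1 else 0) else g x $ i $ j) :: real^'n^'n"
  have det_M: "smooth_fun_on U (\<lambda>x. det (?M x))"
  proof (rule smooth_det[OF open_patch])
    fix i j show "smooth_fun_on U (\<lambda>x. ?M x $ i $ j)"
      by (cases "j = k") (simp_all add: smooth_const smooth_g)
  qed
  have "smooth_fun_on U (\<lambda>x. det (?M x) * inverse (det (g x)))"
    by (intro smooth_mult smooth_inverse open_patch det_M det_g_nonzero smooth_det smooth_g)
  then show ?thesis
    by (rule smooth_cong[OF open_patch, rotated]) (simp add: matrix_inv_cramer det_g_nonzero divide_inverse)
qed

lemma smooth_chr: "smooth_fun_on U (chr g k i j)"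
  unfolding chr_def[abs_def]
  by (intro smooth_cmult smooth_sum smooth_mult smooth_add smooth_diff smooth_pd open_patch
      smooth_g_inv smooth_g finite)

lemma smooth_riem: "smooth_fun_on U (riem g a b c d)"
  unfolding riem_def[abs_def]
  by (intro smooth_cmult smooth_sum smooth_mult smooth_add smooth_diff smooth_pd open_patch smooth_chr finite)

lemma smooth_ric: "smooth_fun_on U (ric g a c)"
  unfolding ric_def[abs_def]
  by (intro smooth_sum open_patch smooth_riem finite)

lemma chr_sym:
  assumes x: "x \<in> U"
  shows "chr g k a b x = chr g k b a x"
proof -
  have "pd l (\<lambda>y. g y $ a $ b) x = pd l (\<lambda>y. g y $ b $ a) x" for l
    by (rule pd_cong_open[OF open_patch x]) (simp add: g_sym)
  then show ?thesis unfolding chr_def by (simp add: add_ac)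
qed

end

section \<open>The Ricci identity\<close>

definition cov3 :: "(real^'n::finite \<Rightarrow> real^'n^'n) \<Rightarrow> ('n \<Rightarrow> 'n \<Rightarrow> real^'n \<Rightarrow> real)
    \<Rightarrow> 'n \<Rightarrow> 'n \<Rightarrow> 'n \<Rightarrow> 'n \<Rightarrow> real^'n \<Rightarrow> real" where
  "cov3 g T d a b c x = pd d (cov2 g T a b c) x
     - (\<Sum>k\<in>UNIV. chr g k d a x * cov2 g T k b c x)
     - (\<Sum>k\<in>UNIV. chr g k d b x * cov2 g T a k c x)
     - (\<Sum>k\<in>UNIV. chr g k d c x * cov2 g T a b k x)"

text \<open>The Ricci identity is pure algebra once everything is evaluated at one point.  In
  the following lemmas G, dG, T, dT, ddT stand for the values at that point of the
  Christoffel symbols, their partials, and the tensor with its first and second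
  partials; C is the covariant derivative nabla T and R the curvature built from G, dG.\<close>
lemma contract_cov2_second_slot:
  fixes G :: "'n::finite \<Rightarrow> 'n \<Rightarrow> 'n \<Rightarrow> real"
  assumes C: "\<And>a b c. C a b c = dT a b c - (\<Sum>k\<in>UNIV. G k a b * T k c) - (\<Sum>k\<in>UNIV. G k a c * T b k)"
  shows "(\<Sum>k\<in>UNIV. G k q r * C p k s) = (\<Sum>k\<in>UNIV. G k q r * dT p k s)
    - (\<Sum>k\<in>UNIV. \<Sum>l\<in>UNIV. G k q r * G l p k * T l s)
    - (\<Sum>k\<in>UNIV. \<Sum>l\<in>UNIV. G k q r * G l p s * T k l)"
  unfolding C by (simp add: sum_subtractf sum_distrib_left sum.distrib algebra_simps)

lemma contract_cov2_third_slot: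
  fixes G :: "'n::finite \<Rightarrow> 'n \<Rightarrow> 'n \<Rightarrow> real"
  assumes C: "\<And>a b c. C a b c = dT a b c - (\<Sum>k\<in>UNIV. G k a b * T k c) - (\<Sum>k\<in>UNIV. G k a c * T b k)"
  shows "(\<Sum>k\<in>UNIV. G k u v * C p q k) = (\<Sum>k\<in>UNIV. G k u v * dT p q k)
    - (\<Sum>k\<in>UNIV. \<Sum>l\<in>UNIV. G k u v * G l p q * T l k)
    - (\<Sum>k\<in>UNIV. \<Sum>l\<in>UNIV. G k u v * G l p k * T q l)"
  unfolding C by (simp add: sum_subtractf sum_distrib_left sum.distrib algebra_simps)

text \<open>Contracting the curvature R_dab^m against a covector S_m, with the double sums in
  the orientation produced by the contractions above.\<close>
lemma contract_curvature:
  fixes G :: "'n::finite \<Rightarrow> 'n \<Rightarrow> 'n \<Rightarrow> real"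
  assumes R: "\<And>d a b m. R d a b m = dG d m a b - dG a m d b - (\<Sum>k\<in>UNIV. G k d b * G m a k)
        + (\<Sum>k\<in>UNIV. G m d k * G k a b)"
  shows "(\<Sum>m\<in>UNIV. R d a b m * S m) = (\<Sum>k\<in>UNIV. (dG d k a b - dG a k d b) * S k)
    - (\<Sum>k\<in>UNIV. \<Sum>l\<in>UNIV. G k d b * G l a k * S l) + (\<Sum>k\<in>UNIV. \<Sum>l\<in>UNIV. G k a b * G l d k * S l)"
proof -
  have "(\<Sum>m\<in>UNIV. R d a b m * S m) = (\<Sum>k\<in>UNIV. (dG d k a b - dG a k d b) * S k)
    - (\<Sum>m\<in>UNIV. \<Sum>k\<in>UNIV. G k d b * G m a k * S m) + (\<Sum>m\<in>UNIV. \<Sum>k\<in>UNIV. G m d k * G k a b * S m)"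
    unfolding R by (simp add: sum_subtractf sum.distrib sum_distrib_right sum_distrib_left algebra_simps)
  moreover have "(\<Sum>m\<in>UNIV. \<Sum>k\<in>UNIV. G k d b * G m a k * S m) = (\<Sum>k\<in>UNIV. \<Sum>l\<in>UNIV. G k d b * G l a k * S l)"
    by (rule sum.swap)
  moreover have "(\<Sum>m\<in>UNIV. \<Sum>k\<in>UNIV. G m d k * G k a b * S m) = (\<Sum>k\<in>UNIV. \<Sum>l\<in>UNIV. G k a b * G l d k * S l)"
    by (subst sum.swap) (simp add: algebra_simps)
  ultimately show ?thesis by simp
qed

text \<open>Algebraic Ricci identity: with P = d_d C and Q = nabla_d C, the antisymmetrised
  second covariant derivative is given by curvature, provided G is symmetric (torsion
  free) and the second partials of T commute.\<close>
lemma ricci_identity_algebraic: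
  fixes G :: "'n::finite \<Rightarrow> 'n \<Rightarrow> 'n \<Rightarrow> real" and dG :: "'n \<Rightarrow> 'n \<Rightarrow> 'n \<Rightarrow> 'n \<Rightarrow> real"
    and T :: "'n \<Rightarrow> 'n \<Rightarrow> real" and dT :: "'n \<Rightarrow> 'n \<Rightarrow> 'n \<Rightarrow> real"
    and ddT :: "'n \<Rightarrow> 'n \<Rightarrow> 'n \<Rightarrow> 'n \<Rightarrow> real"
  assumes G_sym: "\<And>k a b. G k a b = G k b a"
    and ddT_sym: "\<And>d a b c. ddT d a b c = ddT a d b c"
    and C: "\<And>a b c. C a b c = dT a b c - (\<Sum>k\<in>UNIV. G k a b * T k c) - (\<Sum>k\<in>UNIV. G k a c * T b k)"
    and P: "\<And>d a b c. P d a b c = ddT d a b c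
        - (\<Sum>k\<in>UNIV. dG d k a b * T k c + G k a b * dT d k c)
        - (\<Sum>k\<in>UNIV. dG d k a c * T b k + G k a c * dT d b k)"
    and Q: "\<And>d a b c. Q d a b c = P d a b c - (\<Sum>k\<in>UNIV. G k d a * C k b c)
        - (\<Sum>k\<in>UNIV. G k d b * C a k c) - (\<Sum>k\<in>UNIV. G k d c * C a b k)"
    and R: "\<And>d a b m. R d a b m = dG d m a b - dG a m d b - (\<Sum>k\<in>UNIV. G k d b * G m a k)
        + (\<Sum>k\<in>UNIV. G m d k * G k a b)"
  shows "Q d a b c - Q a d b c = - (\<Sum>m\<in>UNIV. R d a b m * T m c) - (\<Sum>m\<in>UNIV. R d a c m * T b m)"
proof -
  have P_antisym: "P d a b c - P a d b c = - (\<Sum>k\<in>UNIV. (dG d k a b - dG a k d b) * T k c)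
     - (\<Sum>k\<in>UNIV. (dG d k a c - dG a k d c) * T b k)
     - (\<Sum>k\<in>UNIV. G k a b * dT d k c) + (\<Sum>k\<in>UNIV. G k d b * dT a k c)
     - (\<Sum>k\<in>UNIV. G k a c * dT d b k) + (\<Sum>k\<in>UNIV. G k d c * dT a b k)"
    unfolding P using ddT_sym[of d a b c]
    by (simp add: sum_subtractf sum.distrib algebra_simps)
  have first_slot_cancels: "(\<Sum>k\<in>UNIV. G k d a * C k b c) = (\<Sum>k\<in>UNIV. G k a d * C k b c)"
    by (simp add: G_sym[of _ d a])
  have Q_antisym: "Q d a b c - Q a d b c = (P d a b c - P a d b c)
     - (\<Sum>k\<in>UNIV. G k d b * C a k c) - (\<Sum>k\<in>UNIV. G k d c * C a b k)
     + (\<Sum>k\<in>UNIV. G k a b * C d k c) + (\<Sum>k\<in>UNIV. G k a c * C d b k)"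
    unfolding Q[of d a b c] Q[of a d b c] using first_slot_cancels by simp
  have cross1: "(\<Sum>k\<in>UNIV. \<Sum>l\<in>UNIV. G k d b * G l a c * T k l)
      = (\<Sum>k\<in>UNIV. \<Sum>l\<in>UNIV. G k a c * G l d b * T l k)"
    by (subst sum.swap) (simp add: algebra_simps)
  have cross2: "(\<Sum>k\<in>UNIV. \<Sum>l\<in>UNIV. G k d c * G l a b * T l k)
      = (\<Sum>k\<in>UNIV. \<Sum>l\<in>UNIV. G k a b * G l d c * T k l)"
    by (subst sum.swap) (simp add: algebra_simps)
  show ?thesis
    unfolding Q_antisym P_antisym
      contract_cov2_second_slot[where C=C and dT=dT and G=G and T=T, OF C]
      contract_cov2_third_slot[where C=C and dT=dT and G=G and T=T, OF C]
      contract_curvature[where R=R and dG=dG and G=G, OF R]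
      cross1 cross2
    by simp
qed

context riemannian_patch
begin

lemma pd_cov2:
  assumes x: "x \<in> U" and T: "\<And>b c. smooth_fun_on U (T b c)"
  shows "pd d (cov2 g T a b c) x = pd d (pd a (T b c)) x
        - (\<Sum>k\<in>UNIV. pd d (chr g k a b) x * T k c x + chr g k a b x * pd d (T k c) x)
        - (\<Sum>k\<in>UNIV. pd d (chr g k a c) x * T b k x + chr g k a c x * pd d (T b k) x)"
proof -
  have smooth_term: "smooth_fun_on U (\<lambda>y. \<Sum>k\<in>UNIV. chr g k a p y * T (q k) (r k) y)"
    for p and q r :: "'n \<Rightarrow> 'n"
    by (intro smooth_sum open_patch smooth_mult smooth_chr T) auto
  have pd_term: "pd d (\<lambda>y. \<Sum>k\<in>UNIV. chr g k a p y * T (q k) (r k) y) x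
      = (\<Sum>k\<in>UNIV. pd d (chr g k a p) x * T (q k) (r k) x + chr g k a p x * pd d (T (q k) (r k)) x)"
    for p and q r :: "'n \<Rightarrow> 'n"
    by (simp add: pd_sum pd_mult smooth_differentiable[OF smooth_mult[OF open_patch smooth_chr T] x]
        smooth_differentiable[OF smooth_chr x] smooth_differentiable[OF T x])
  have s1: "smooth_fun_on U (pd a (T b c))" by (rule smooth_pd[OF T])
  have s12: "smooth_fun_on U (\<lambda>y. pd a (T b c) y - (\<Sum>k\<in>UNIV. chr g k a b y * T k c y))"
    by (rule smooth_diff[OF open_patch s1 smooth_term[of b "\<lambda>k. k" "\<lambda>_. c"]])
  have "cov2 g T a b c = (\<lambda>y. (pd a (T b c) y - (\<Sum>k\<in>UNIV. chr g k a b y * T k c y))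
       - (\<Sum>k\<in>UNIV. chr g k a c y * T b k y))"
    by (rule ext) (simp add: cov2_def)
  then have "pd d (cov2 g T a b c) x
      = pd d (pd a (T b c)) x - pd d (\<lambda>y. \<Sum>k\<in>UNIV. chr g k a b y * T k c y) x
      - pd d (\<lambda>y. \<Sum>k\<in>UNIV. chr g k a c y * T b k y) x"
    using pd_diff[OF smooth_differentiable[OF s12 x] smooth_differentiable[OF smooth_term[of c "\<lambda>_. b" "\<lambda>k. k"] x]]
      pd_diff[OF smooth_differentiable[OF s1 x] smooth_differentiable[OF smooth_term[of b "\<lambda>k. k" "\<lambda>_. c"] x]]
    by simp
  then show ?thesis
    using pd_term[of b "\<lambda>k. k" "\<lambda>_. c"] pd_term[of c "\<lambda>_. b" "\<lambda>k. k"] by simp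
qed

lemma ricci_identity:
  assumes x: "x \<in> U" and T: "\<And>b c. smooth_fun_on U (T b c)"
  shows "cov3 g T d a b c x - cov3 g T a d b c x
     = - (\<Sum>m\<in>UNIV. riem g d a b m x * T m c x) - (\<Sum>m\<in>UNIV. riem g d a c m x * T b m x)"
proof (rule ricci_identity_algebraic[where G="\<lambda>k a b. chr g k a b x" and dG="\<lambda>d k a b. pd d (chr g k a b) x"
      and T="\<lambda>b c. T b c x" and dT="\<lambda>d b c. pd d (T b c) x" and ddT="\<lambda>d a b c. pd d (pd a (T b c)) x"
      and C="\<lambda>a b c. cov2 g T a b c x" and P="\<lambda>d a b c. pd d (cov2 g T a b c) x"])
  show "\<And>k a b. chr g k a b x = chr g k b a x" by (rule chr_sym[OF x])
  show "\<And>d a b c. pd d (pd a (T b c)) x = pd a (pd d (T b c)) x"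
    using schwarz[OF open_patch x] T smooth_iff_Ck_on by blast
  show "\<And>d a b c. pd d (cov2 g T a b c) x = pd d (pd a (T b c)) x
        - (\<Sum>k\<in>UNIV. pd d (chr g k a b) x * T k c x + chr g k a b x * pd d (T k c) x)
        - (\<Sum>k\<in>UNIV. pd d (chr g k a c) x * T b k x + chr g k a c x * pd d (T b k) x)"
    by (rule pd_cov2[OF x T])
qed (simp_all add: cov2_def cov3_def riem_def)

end


section \<open>Algebraic symmetries of the curvature\<close>

lemma sum_kronecker_left:
  fixes f :: "'n::finite \<Rightarrow> real"
  shows "(\<Sum>l\<in>UNIV. (if c = l then 1 else 0) * f l) = f c"
  by (simp add: of_bool_def[symmetric])

lemma sum_kronecker_right:
  fixes f :: "'n::finite \<Rightarrow> real"
  shows "(\<Sum>l\<in>UNIV. f l * (if l = c then 1 else 0)) = f c"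
  by (simp add: of_bool_def[symmetric])

lemma riem_antisym: "riem g a b c m x = - riem g b a c m x"
  unfolding riem_def by (simp add: algebra_simps)

context riemannian_patch
begin

lemma g_mult_inverse: "x \<in> U \<Longrightarrow> (\<Sum>k\<in>UNIV. g x $ c $ k * matrix_inv (g x) $ k $ l) = (if c = l then 1 else 0)"
proof -
  assume x: "x \<in> U"
  have "(g x ** matrix_inv (g x)) $ c $ l = mat 1 $ c $ l" using g_inverse[OF x] by simp
  then show ?thesis by (simp add: matrix_matrix_mult_def mat_def)
qed

lemma g_inverse_sym: "x \<in> U \<Longrightarrow> matrix_inv (g x) $ k $ l = matrix_inv (g x) $ l $ k"
proof -
  assume x: "x \<in> U"
  let ?A = "g x" and ?B = "matrix_inv (g x)"
  have tA: "transpose ?A = ?A" by (simp add: vec_eq_iff transpose_def g_sym[OF x])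
  have "transpose ?B ** ?A = mat 1"
    using g_inverse[OF x] by (metis matrix_transpose_mul tA transpose_mat)
  then have "transpose ?B = transpose ?B ** (?A ** ?B)" using g_inverse[OF x] by simp
  also have "\<dots> = ?B" by (simp add: matrix_mul_assoc \<open>transpose ?B ** ?A = mat 1\<close>)
  finally have "transpose ?B = ?B" .
  then have "transpose ?B $ l $ k = ?B $ l $ k" by simp
  then show ?thesis by (simp add: transpose_def)
qed

lemma chr_lowered:
  assumes x: "x \<in> U"
  shows "(\<Sum>k\<in>UNIV. chr g k a b x * g x $ k $ c) =
    (1/2) * (pd a (\<lambda>y. g y $ b $ c) x + pd b (\<lambda>y. g y $ a $ c) x - pd c (\<lambda>y. g y $ a $ b) x)"
proof -
  let ?X = "\<lambda>l. pd a (\<lambda>y. g y $ b $ l) x + pd b (\<lambda>y. g y $ a $ l) x - pd l (\<lambda>y. g y $ a $ b) x"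
  have "(\<Sum>k\<in>UNIV. chr g k a b x * g x $ k $ c)
      = (1/2) * (\<Sum>k\<in>UNIV. \<Sum>l\<in>UNIV. g x $ c $ k * matrix_inv (g x) $ k $ l * ?X l)"
    unfolding chr_def by (simp add: sum_distrib_left sum_distrib_right g_sym[OF x, of _ c] algebra_simps)
  also have "\<dots> = (1/2) * (\<Sum>l\<in>UNIV. (\<Sum>k\<in>UNIV. g x $ c $ k * matrix_inv (g x) $ k $ l) * ?X l)"
    by (subst sum.swap) (simp add: sum_distrib_right)
  also have "\<dots> = (1/2) * ?X c"
    by (simp only: g_mult_inverse[OF x] sum_kronecker_left)
  finally show ?thesis .
qed

lemma pd_g_sym: "x \<in> U \<Longrightarrow> pd i (\<lambda>y. g y $ a $ b) x = pd i (\<lambda>y. g y $ b $ a) x"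
  by (rule pd_cong_open[OF open_patch]) (auto simp: g_sym)

lemma cov2_metric_zero: "x \<in> U \<Longrightarrow> cov2 g (\<lambda>b c y. g y $ b $ c) a b c x = 0"
proof -
  assume x: "x \<in> U"
  have e1: "(\<Sum>k\<in>UNIV. chr g k a b x * g x $ k $ c) =
    (1/2) * (pd a (\<lambda>y. g y $ b $ c) x + pd b (\<lambda>y. g y $ a $ c) x - pd c (\<lambda>y. g y $ a $ b) x)"
    by (rule chr_lowered[OF x])
  have e2: "(\<Sum>k\<in>UNIV. chr g k a c x * g x $ b $ k) =
    (1/2) * (pd a (\<lambda>y. g y $ c $ b) x + pd c (\<lambda>y. g y $ a $ b) x - pd b (\<lambda>y. g y $ a $ c) x)"
    using chr_lowered[OF x, of a c b] by (simp add: g_sym[OF x, of b])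
  show ?thesis unfolding cov2_def e1 e2 using pd_g_sym[OF x, of a c b] by (simp add: field_simps)
qed

lemma cov3_metric_zero: "x \<in> U \<Longrightarrow> cov3 g (\<lambda>b c y. g y $ b $ c) d a b c x = 0"
proof -
  assume x: "x \<in> U"
  have "pd d (cov2 g (\<lambda>b c y. g y $ b $ c) a b c) x = pd d (\<lambda>y. 0) x"
    by (rule pd_cong_open[OF open_patch x]) (simp add: cov2_metric_zero)
  then show ?thesis unfolding cov3_def by (simp add: cov2_metric_zero[OF x] pd_const)
qed

text \<open>Ricci identity applied to g: the lowered curvature R_dabc is antisymmetric in (b,c).\<close>
lemma riem_lowered_antisym:
  assumes x: "x \<in> U"
  shows "(\<Sum>m\<in>UNIV. riem g d a b m x * g x $ m $ c) = - (\<Sum>m\<in>UNIV. riem g d a c m x * g x $ b $ m)"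
  using ricci_identity[OF x, of "\<lambda>b c y. g y $ b $ c" d a b c] cov3_metric_zero[OF x] smooth_g by simp

lemma pd_chr_sym: "x \<in> U \<Longrightarrow> pd i (chr g k a b) x = pd i (chr g k b a) x"
  by (rule pd_cong_open[OF open_patch]) (auto simp: chr_sym)

text \<open>First Bianchi identity, from the symmetry of Gamma and of its partials.\<close>
lemma first_bianchi:
  assumes x: "x \<in> U"
  shows "riem g a b c m x + riem g b c a m x + riem g c a b m x = 0"
proof -
  have s: "\<And>k a b. chr g k a b x = chr g k b a x" by (rule chr_sym[OF x])
  have p: "\<And>i k a b. pd i (chr g k a b) x = pd i (chr g k b a) x" by (rule pd_chr_sym[OF x])
  show ?thesis unfolding riem_def
    by (simp add: s[of _ a c] s[of _ b a] s[of _ c b] p[of _ _ c b] p[of _ _ a c] p[of _ _ b a] algebra_simps)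
qed

text \<open>The trace R_cab^b vanishes: it pairs the (b,e)-antisymmetric lowered curvature
  with the symmetric inverse metric.\<close>
lemma riem_trace_zero:
  assumes x: "x \<in> U"
  shows "(\<Sum>b\<in>UNIV. riem g c a b b x) = 0"
proof -
  define L where "L b e = (\<Sum>m\<in>UNIV. riem g c a b m x * g x $ m $ e)" for b e
  define H where "H e b = matrix_inv (g x) $ e $ b" for e b
  have Lanti: "L b e = - L e b" for b e
    unfolding L_def using riem_lowered_antisym[OF x, of c a b e] g_sym[OF x] by simp
  have Hsym: "H e b = H b e" for e b unfolding H_def by (rule g_inverse_sym[OF x])
  have "(\<Sum>b\<in>UNIV. riem g c a b b x) = (\<Sum>b\<in>UNIV. \<Sum>m\<in>UNIV. riem g c a b m x * (\<Sum>e\<in>UNIV. g x $ m $ e * H e b))"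
    unfolding H_def by (simp only: g_mult_inverse[OF x] sum_kronecker_right)
  also have "\<dots> = (\<Sum>b\<in>UNIV. \<Sum>e\<in>UNIV. L b e * H e b)"
    unfolding L_def by (simp add: sum_distrib_left sum_distrib_right mult.assoc) (rule sum.cong[OF refl], rule sum.swap)
  finally have S: "(\<Sum>b\<in>UNIV. riem g c a b b x) = (\<Sum>b\<in>UNIV. \<Sum>e\<in>UNIV. L b e * H e b)" .
  have "(\<Sum>b\<in>UNIV. \<Sum>e\<in>UNIV. L b e * H e b) = (\<Sum>e\<in>UNIV. \<Sum>b\<in>UNIV. L b e * H e b)" by (rule sum.swap)
  also have "\<dots> = - (\<Sum>e\<in>UNIV. \<Sum>b\<in>UNIV. L e b * H b e)"
    unfolding sum_negf[symmetric]
    by (rule sum.cong[OF refl], rule sum.cong[OF refl], subst Lanti, subst Hsym, simp)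
  finally have "(\<Sum>b\<in>UNIV. \<Sum>e\<in>UNIV. L b e * H e b) = 0" by simp
  then show ?thesis using S by simp
qed

text \<open>Symmetry of the Ricci tensor, from Bianchi and the vanishing trace.\<close>
lemma ric_sym:
  assumes x: "x \<in> U"
  shows "ric g a c x = ric g c a x"
proof -
  have "riem g a b c b x - riem g c b a b x = - riem g c a b b x" for b
    using first_bianchi[OF x, of a b c b] riem_antisym[of g c b a b x] by simp
  then have "ric g a c x - ric g c a x = - (\<Sum>b\<in>UNIV. riem g c a b b x)"
    unfolding ric_def by (simp add: sum_subtractf[symmetric] sum_negf)
  then show ?thesis using riem_trace_zero[OF x] by simp
qed

end


section \<open>Weakly Ricci symmetric metrics\<close>

lemma cov1_diff:
  assumes x: "x \<in> U" and A: "\<And>i. smooth_fun_on U (\<lambda>x. A x $ i)" and B: "\<And>i. smooth_fun_on U (\<lambda>x. B x $ i)"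
  shows "cov1 g (\<lambda>x. A x - B x) d a x = cov1 g A d a x - cov1 g B d a x"
proof -
  have "pd d (\<lambda>y. (A y - B y) $ a) x = pd d (\<lambda>y. A y $ a - B y $ a) x" by simp
  also have "\<dots> = pd d (\<lambda>y. A y $ a) x - pd d (\<lambda>y. B y $ a) x"
    by (rule pd_diff[OF smooth_differentiable[OF A x] smooth_differentiable[OF B x]])
  finally show ?thesis unfolding cov1_def by (simp add: sum_subtractf algebra_simps)
qed

text \<open>Leibniz rule for the covariant derivative of the defining relation, at one point:
  Q = nabla R is given by the relation, P = d_d Q is its partial derivative, and
  Q3 = nabla_d Q.\<close>
lemma leibniz_algebraic:
  fixes G :: "'n::finite \<Rightarrow> 'n \<Rightarrow> 'n \<Rightarrow> real" and Av Bv Dv :: "'n \<Rightarrow> real"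
    and dA dB dD R :: "'n \<Rightarrow> 'n \<Rightarrow> real" and dR :: "'n \<Rightarrow> 'n \<Rightarrow> 'n \<Rightarrow> real"
  assumes Q_rel: "\<And>a b c. Q a b c = Av a * R b c + Bv b * R a c + Dv c * R a b"
    and Q_cov: "\<And>a b c. Q a b c = dR a b c - (\<Sum>k\<in>UNIV. G k a b * R k c) - (\<Sum>k\<in>UNIV. G k a c * R b k)"
    and P: "P = dA d a * R b c + Av a * dR d b c + dB d b * R a c + Bv b * dR d a c
      + dD d c * R a b + Dv c * dR d a b"
    and Q3: "Q3 = P - (\<Sum>k\<in>UNIV. G k d a * Q k b c) - (\<Sum>k\<in>UNIV. G k d b * Q a k c)
      - (\<Sum>k\<in>UNIV. G k d c * Q a b k)"
  shows "Q3 = (dA d a - (\<Sum>k\<in>UNIV. G k d a * Av k)) * R b c + Av a * Q d b c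
    + (dB d b - (\<Sum>k\<in>UNIV. G k d b * Bv k)) * R a c + Bv b * Q d a c
    + (dD d c - (\<Sum>k\<in>UNIV. G k d c * Dv k)) * R a b + Dv c * Q d a b"
proof -
  have dR: "\<And>a b c. dR a b c = Q a b c + (\<Sum>k\<in>UNIV. G k a b * R k c) + (\<Sum>k\<in>UNIV. G k a c * R b k)"
    using Q_cov by simp
  show ?thesis
    unfolding Q3 P dR unfolding Q_rel
    by (simp add: sum.distrib sum_subtractf sum_distrib_left sum_distrib_right algebra_simps)
qed

text \<open>Cyclic summation over (d,a,b) of the antisymmetrised Leibniz expansion E: when
  R is symmetric, all terms cancel except the curls of A - B.\<close>
lemma cyclic_sum_algebraic:
  fixes R :: "'n \<Rightarrow> 'n \<Rightarrow> real" and cA cB cD :: "'n \<Rightarrow> 'n \<Rightarrow> real" and Av Bv Dv :: "'n \<Rightarrow> real"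
  assumes R_sym: "\<And>i j. R i j = R j i"
    and Q_rel: "\<And>a b c. Q a b c = Av a * R b c + Bv b * R a c + Dv c * R a b"
    and E: "\<And>d a b. E d a b =
        (cA d a * R b c + Av a * Q d b c + cB d b * R a c + Bv b * Q d a c + cD d c * R a b + Dv c * Q d a b)
      - (cA a d * R b c + Av d * Q a b c + cB a b * R d c + Bv b * Q a d c + cD a c * R d b + Dv c * Q a d b)"
  shows "E d a b + E a b d + E b d a =
     R c b * ((cA d a - cB d a) - (cA a d - cB a d)) + R c a * ((cA b d - cB b d) - (cA d b - cB d b))
     + R c d * ((cA a b - cB a b) - (cA b a - cB b a))"
  unfolding E Q_rel by (simp add: R_sym[of _ c] R_sym[of b a] R_sym[of d a] R_sym[of d b] algebra_simps)

text \<open>A Riemannian patch carrying smooth covector fields A, B, D with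
  nabla_a R_bc = A_a R_bc + B_b R_ac + D_c R_ab.\<close>
locale weakly_ricci_symmetric_patch = riemannian_patch U g
  for U :: "(real^'n::finite) set" and g :: "real^'n \<Rightarrow> real^'n^'n" +
  fixes A B D :: "real^'n \<Rightarrow> real^'n"
  assumes smooth_A: "\<And>i. smooth_fun_on U (\<lambda>x. A x $ i)"
    and smooth_B: "\<And>i. smooth_fun_on U (\<lambda>x. B x $ i)"
    and smooth_D: "\<And>i. smooth_fun_on U (\<lambda>x. D x $ i)"
    and cov_ric: "\<And>x a b c. x \<in> U \<Longrightarrow>
      cov2 g (ric g) a b c x = A x $ a * ric g b c x + B x $ b * ric g a c x + D x $ c * ric g a b x"
begin

text \<open>Since R_bc is symmetric, so is nabla_a R_bc in (b,c); hence B and D may be exchanged.\<close>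
lemma cov2_ric_sym:
  assumes x: "x \<in> U"
  shows "cov2 g (ric g) a b c x = cov2 g (ric g) a c b x"
proof -
  have "pd a (ric g b c) x = pd a (ric g c b) x"
    by (rule pd_cong_open[OF open_patch x]) (simp add: ric_sym)
  then show ?thesis unfolding cov2_def using ric_sym[OF x] by simp
qed

lemma swap_B_D: "weakly_ricci_symmetric_patch U g A D B"
proof unfold_locales
  fix x a b c assume x: "x \<in> U"
  have "cov2 g (ric g) a b c x = cov2 g (ric g) a c b x" by (rule cov2_ric_sym[OF x])
  also have "\<dots> = A x $ a * ric g c b x + B x $ c * ric g a b x + D x $ b * ric g a c x" by (rule cov_ric[OF x])
  finally show "cov2 g (ric g) a b c x = A x $ a * ric g b c x + D x $ b * ric g a c x + B x $ c * ric g a b x"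
    using ric_sym[OF x, of c b] by simp
qed (use smooth_A smooth_B smooth_D in auto)

lemma pd_cov2_ric:
  assumes x: "x \<in> U"
  shows "pd d (cov2 g (ric g) a b c) x =
      pd d (\<lambda>y. A y $ a) x * ric g b c x + A x $ a * pd d (ric g b c) x
    + pd d (\<lambda>y. B y $ b) x * ric g a c x + B x $ b * pd d (ric g a c) x
    + pd d (\<lambda>y. D y $ c) x * ric g a b x + D x $ c * pd d (ric g a b) x"
proof -
  have "pd d (cov2 g (ric g) a b c) x
      = pd d (\<lambda>y. (A y $ a * ric g b c y + B y $ b * ric g a c y) + D y $ c * ric g a b y) x"
    by (rule pd_cong_open[OF open_patch x]) (simp add: cov_ric)
  also have "\<dots> = pd d (\<lambda>y. A y $ a * ric g b c y + B y $ b * ric g a c y) x + pd d (\<lambda>y. D y $ c * ric g a b y) x"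
    by (rule pd_add; rule smooth_differentiable[OF _ x];
        intro smooth_add smooth_mult open_patch smooth_A smooth_B smooth_D smooth_ric)
  also have "pd d (\<lambda>y. A y $ a * ric g b c y + B y $ b * ric g a c y) x
      = pd d (\<lambda>y. A y $ a * ric g b c y) x + pd d (\<lambda>y. B y $ b * ric g a c y) x"
    by (rule pd_add; rule smooth_differentiable[OF _ x];
        intro smooth_mult open_patch smooth_A smooth_B smooth_ric)
  finally show ?thesis
    by (simp add: pd_mult smooth_differentiable[OF smooth_A x] smooth_differentiable[OF smooth_B x]
        smooth_differentiable[OF smooth_D x] smooth_differentiable[OF smooth_ric x])
qed

lemma cov3_ric:
  assumes x: "x \<in> U"
  shows "cov3 g (ric g) d a b c x = cov1 g A d a x * ric g b c x + A x $ a * cov2 g (ric g) d b c x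
    + cov1 g B d b x * ric g a c x + B x $ b * cov2 g (ric g) d a c x
    + cov1 g D d c x * ric g a b x + D x $ c * cov2 g (ric g) d a b x"
proof (rule leibniz_algebraic[where G="\<lambda>k a b. chr g k a b x" and Av="\<lambda>i. A x $ i" and Bv="\<lambda>i. B x $ i"
      and Dv="\<lambda>i. D x $ i" and dA="\<lambda>d a. pd d (\<lambda>y. A y $ a) x" and dB="\<lambda>d a. pd d (\<lambda>y. B y $ a) x"
      and dD="\<lambda>d a. pd d (\<lambda>y. D y $ a) x" and R="\<lambda>b c. ric g b c x" and dR="\<lambda>d b c. pd d (ric g b c) x"
      and Q="\<lambda>a b c. cov2 g (ric g) a b c x" and P="pd d (cov2 g (ric g) a b c) x", unfolded cov1_def[symmetric]])
  show "\<And>a b c. cov2 g (ric g) a b c x = A x $ a * ric g b c x + B x $ b * ric g a c x + D x $ c * ric g a b x"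
    by (rule cov_ric[OF x])
qed (auto simp: pd_cov2_ric[OF x] cov2_def cov3_def)

text \<open>Left side: cyclic sum of the Leibniz expansion of
  [nabla_d, nabla_a] R_bc.  Right side: the Ricci identity plus first Bianchi identity.\<close>
lemma cyclic_curl_identity:
  assumes x: "x \<in> U"
  shows "ric g c b x * (cov1 g (\<lambda>x. A x - B x) d a x - cov1 g (\<lambda>x. A x - B x) a d x)
   + ric g c a x * (cov1 g (\<lambda>x. A x - B x) b d x - cov1 g (\<lambda>x. A x - B x) d b x)
   + ric g c d x * (cov1 g (\<lambda>x. A x - B x) a b x - cov1 g (\<lambda>x. A x - B x) b a x)
   = (\<Sum>m\<in>UNIV. ric g d m x * riem g b a c m x + ric g b m x * riem g a d c m x
                 + ric g a m x * riem g d b c m x)"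
proof -
  define E where "E d a b = cov3 g (ric g) d a b c x - cov3 g (ric g) a d b c x" for d a b
  have cyclic: "E d a b + E a b d + E b d a =
     ric g c b x * ((cov1 g A d a x - cov1 g B d a x) - (cov1 g A a d x - cov1 g B a d x))
     + ric g c a x * ((cov1 g A b d x - cov1 g B b d x) - (cov1 g A d b x - cov1 g B d b x))
     + ric g c d x * ((cov1 g A a b x - cov1 g B a b x) - (cov1 g A b a x - cov1 g B b a x))"
    by (rule cyclic_sum_algebraic[where R="\<lambda>i j. ric g i j x" and Q="\<lambda>a b c. cov2 g (ric g) a b c x"
      and Av="\<lambda>i. A x $ i" and Bv="\<lambda>i. B x $ i" and Dv="\<lambda>i. D x $ i"
      and cA="\<lambda>d a. cov1 g A d a x" and cB="\<lambda>d a. cov1 g B d a x" and cD="\<lambda>d a. cov1 g D d a x"])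
      (simp_all add: ric_sym[OF x] cov_ric[OF x] E_def cov3_ric[OF x])
  have commutator: "E d a b = - (\<Sum>m\<in>UNIV. riem g d a b m x * ric g m c x)
      - (\<Sum>m\<in>UNIV. riem g d a c m x * ric g b m x)" for d a b
    unfolding E_def by (rule ricci_identity[OF x smooth_ric])
  have bianchi_contracted: "(\<Sum>m\<in>UNIV. riem g d a b m x * ric g m c x) + (\<Sum>m\<in>UNIV. riem g a b d m x * ric g m c x)
      + (\<Sum>m\<in>UNIV. riem g b d a m x * ric g m c x) = 0"
    using first_bianchi[OF x] by (simp add: sum.distrib[symmetric] distrib_right[symmetric])
  have rhs: "(\<Sum>m\<in>UNIV. ric g d m x * riem g b a c m x + ric g b m x * riem g a d c m x
                 + ric g a m x * riem g d b c m x)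
     = - (\<Sum>m\<in>UNIV. riem g d a c m x * ric g b m x) - (\<Sum>m\<in>UNIV. riem g a b c m x * ric g d m x)
       - (\<Sum>m\<in>UNIV. riem g b d c m x * ric g a m x)"
    by (simp add: riem_antisym[of g b a c _ x] riem_antisym[of g a d c _ x] riem_antisym[of g d b c _ x]
        sum.distrib sum_negf sum_subtractf algebra_simps)
  show ?thesis
    unfolding cov1_diff[OF x smooth_A smooth_B] rhs cyclic[symmetric] commutator
    using bianchi_contracted by linarith
qed

end

theorem mainTheorem13:
  fixes U :: "(real^'n::finite) set"
    and g :: "real^'n \<Rightarrow> real^'n^'n"
    and A B D :: "real^'n \<Rightarrow> real^'n"
  assumes "weakly_ricci_symmetric_on U g A B D"
  shows "\<forall>\<alpha> \<in> {(\<lambda>x. A x - B x), (\<lambda>x. A x - D x)}. \<forall>x\<in>U. \<forall>a b c d.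
     ric g c b x * (cov1 g \<alpha> d a x - cov1 g \<alpha> a d x)
   + ric g c a x * (cov1 g \<alpha> b d x - cov1 g \<alpha> d b x)
   + ric g c d x * (cov1 g \<alpha> a b x - cov1 g \<alpha> b a x)
   = (\<Sum>m\<in>UNIV. ric g d m x * riem g b a c m x + ric g b m x * riem g a d c m x
                 + ric g a m x * riem g d b c m x)"
proof -
  interpret W: weakly_ricci_symmetric_patch U g A B D
    using assms unfolding weakly_ricci_symmetric_on_def
    by unfold_locales (auto simp: riemannian_patch_def)
  interpret W': weakly_ricci_symmetric_patch U g A D B
    by (rule W.swap_B_D)
  show ?thesis
    using W.cyclic_curl_identity W'.cyclic_curl_identity by simp
qed

end
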